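(* Let $p\ge3$ and consider the dynamic panel logit AR($p$) model with $T=4$: binary outcomes $Y_{1-p},\dots,Y_0,Y_1,\dots,Y_4\in\{0,1\}$, regressors $X=(X_1,\dots,X_4)\in\mathbb{R}^{K\times4}$, fixed effect $A\in\mathbb{R}$, with, for $t\in\{1,\dots,4\}$, $$\Pr(Y_t=1\mid Y_{1-p},\dots,Y_{t-1},X,A)=\frac{\exp(X_t'\beta_0+\sum_{\ell=1}^pY_{t-\ell}\gamma_{0,\ell}+A)}{1+\exp(X_t'\beta_0+\sum_{\ell=1}^pY_{t-\ell}\gamma_{0,\ell}+A)}$$ and true parameters $\beta_0\in\mathbb{R}^K$, $\gamma_0\in\mathbb{R}^p$. Let $Y^{(0)}=(Y_{1-p},\dots,Y_0)$, $0_p$ the $p$-vector of zeros, $x_{ts}=x_t-x_s$, and for $y=(y_1,\dots,y_4)\in\{0,1\}^4$, $x=(x_1,x_2,x_3,x_3)$, $\beta\in\mathbb{R}^K$, $\gamma\in\mathbb{R}^p$ define $$m^{(a)}=\begin{cases}e^{x_{23}'\beta}&y=(0,0,1,0),\\ e^{x_{23}'\beta-\gamma_1}&y=(0,0,1,1),\\ -1&(y_1,y_2,y_3)=(0,1,0),\\0&\text{otherwise},\end{cases}\qquad m^{(b)}=\begin{cases}e^{x_{12}'\beta}&(y_1,y_2,y_3)=(0,1,0),\\ e^{x_{12}'\beta}[1+e^{x_{23}'\beta-\gamma_1}-e^{\gamma_2}]&y=(0,1,1,0),\\ e^{x_{13}'\beta-\gamma_1-\gamma_2}&y=(0,1,1,1),\\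 -1&(y_1,y_2)=(1,0),\\ e^{x_{32}'\beta+\gamma_2}-1&(y_1,y_2,y_3)=(1,1,0),\\0&\text{otherwise},\end{cases}$$ $$m^{(c)}=\begin{cases}-e^{\gamma_1}&y=(0,0,1,0),\\ -1&y=(0,0,1,1),\\ e^{x_{32}'\beta}[e^{\gamma_1}-e^{\gamma_2}]&y=(0,1,0,0),\\ e^{\gamma_1-\gamma_2}-1&y=(0,1,0,1),\\ -1&(y_1,y_2,y_3)=(0,1,1),\\ e^{x_{31}'\beta+\gamma_2}&(y_1,y_2,y_3)=(1,0,0),\\ e^{x_{21}'\beta+\gamma_1}&(y_1,y_2,y_3)=(1,0,1),\\0&\text{otherwise}.\end{cases}$$ Then for all $(x_1,x_2,x_3)\in\mathbb{R}^{K\times3}$, $\alpha\in\mathbb{R}$ and $\xi\in\{a,b,c\}$, $$\mathbb{E}\big[m^{(\xi)}(Y,X,\beta_0,\gamma_0)\mid Y^{(0)}=0_p,X=(x_1,x_2,x_3,x_3),A=\alpha\big]=0,$$ where $Y=(Y_1,\dots,Y_4)$.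
   Context: The joint distribution of $(Y^{(0)},X,A)$ is unrestricted; only the conditional law of $(Y_1,\dots,Y_4)$ given $(Y^{(0)},X,A)$ is specified by the model. The paper defines $m^{(a)}$ as $\mathbb{1}(y_1=0)$ times the $T=3$ moment function for initial condition $0_p$ applied to $(y_2,y_3,y_4)$ and regressors $(x_2,x_3,x_3)$, and $m^{(b)}$ as the AR(2), $T=4$ moment function $m^{(d)}_{(0,0)}$ evaluated at $x=(x_1,x_2,x_3,x_3)$ and $(\gamma_1,\gamma_2)$; the displayed formulas are these functions written out explicitly (with $x_4=x_3$ substituted). *)

theory Defs
  imports "HOL-Analysis.Analysis"
begin

text \<open>Dynamic panel logit AR(p) model with T = 4. Time is indexed by integers;
  outcomes in periods 1..4 are given by a list ys of length 4 with entries in {0,1}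
  (ys ! (t-1) is y_t); the initial condition Y^(0) = (Y_{1-p},...,Y_0) is a function y0
  on periods \<le> 0. Regressors X_t (t = 1..4) are vectors in real^'k.\<close>

definition logistic :: "real \<Rightarrow> real" where
  "logistic z = exp z / (1 + exp z)"

definition hist :: "(int \<Rightarrow> real) \<Rightarrow> nat list \<Rightarrow> int \<Rightarrow> real" where
  "hist y0 ys t = (if t \<le> 0 then y0 t else real (ys ! nat (t - 1)))"

definition lin_index :: "nat \<Rightarrow> real^'k \<Rightarrow> (nat \<Rightarrow> real) \<Rightarrow> (int \<Rightarrow> real^'k) \<Rightarrow> real
    \<Rightarrow> (int \<Rightarrow> real) \<Rightarrow> nat list \<Rightarrow> int \<Rightarrow> real" where
  "lin_index p \<beta> \<gamma> X \<alpha> y0 ys t =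
     X t \<bullet> \<beta> + (\<Sum>l = 1..p. hist y0 ys (t - int l) * \<gamma> l) + \<alpha>"

definition path_prob :: "nat \<Rightarrow> real^'k \<Rightarrow> (nat \<Rightarrow> real) \<Rightarrow> (int \<Rightarrow> real^'k) \<Rightarrow> real
    \<Rightarrow> (int \<Rightarrow> real) \<Rightarrow> nat list \<Rightarrow> real" where
  "path_prob p \<beta> \<gamma> X \<alpha> y0 ys =
     (\<Prod>t\<in>{1..4::int}.
        (if ys ! nat (t - 1) = 1 then logistic (lin_index p \<beta> \<gamma> X \<alpha> y0 ys t)
         else 1 - logistic (lin_index p \<beta> \<gamma> X \<alpha> y0 ys t)))"

definition outcomes4 :: "nat list set" where
  "outcomes4 = {ys. length ys = 4 \<and> set ys \<subseteq> {0, 1}}"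

definition cond_exp :: "nat \<Rightarrow> real^'k \<Rightarrow> (nat \<Rightarrow> real) \<Rightarrow> (int \<Rightarrow> real^'k) \<Rightarrow> real
    \<Rightarrow> (int \<Rightarrow> real) \<Rightarrow> (nat list \<Rightarrow> real) \<Rightarrow> real" where
  "cond_exp p \<beta> \<gamma> X \<alpha> y0 m = (\<Sum>ys\<in>outcomes4. path_prob p \<beta> \<gamma> X \<alpha> y0 ys * m ys)"

definition m_a :: "real^'k \<Rightarrow> real^'k \<Rightarrow> real^'k \<Rightarrow> real^'k \<Rightarrow> (nat \<Rightarrow> real) \<Rightarrow> nat list \<Rightarrow> real" where
  "m_a x1 x2 x3 \<beta> \<gamma> ys =
     (if ys = [0,0,1,0] then exp ((x2 - x3) \<bullet> \<beta>)
      else if ys = [0,0,1,1] then exp ((x2 - x3) \<bullet> \<beta> - \<gamma> 1)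
      else if take 3 ys = [0,1,0] then -1
      else 0)"

definition m_b :: "real^'k \<Rightarrow> real^'k \<Rightarrow> real^'k \<Rightarrow> real^'k \<Rightarrow> (nat \<Rightarrow> real) \<Rightarrow> nat list \<Rightarrow> real" where
  "m_b x1 x2 x3 \<beta> \<gamma> ys =
     (if take 3 ys = [0,1,0] then exp ((x1 - x2) \<bullet> \<beta>)
      else if ys = [0,1,1,0] then
        exp ((x1 - x2) \<bullet> \<beta>) * (1 + exp ((x2 - x3) \<bullet> \<beta> - \<gamma> 1) - exp (\<gamma> 2))
      else if ys = [0,1,1,1] then exp ((x1 - x3) \<bullet> \<beta> - \<gamma> 1 - \<gamma> 2)
      else if take 2 ys = [1,0] then -1
      else if take 3 ys = [1,1,0] then exp ((x3 - x2) \<bullet> \<beta> + \<gamma> 2) - 1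
      else 0)"

definition m_c :: "real^'k \<Rightarrow> real^'k \<Rightarrow> real^'k \<Rightarrow> real^'k \<Rightarrow> (nat \<Rightarrow> real) \<Rightarrow> nat list \<Rightarrow> real" where
  "m_c x1 x2 x3 \<beta> \<gamma> ys =
     (if ys = [0,0,1,0] then - exp (\<gamma> 1)
      else if ys = [0,0,1,1] then -1
      else if ys = [0,1,0,0] then exp ((x3 - x2) \<bullet> \<beta>) * (exp (\<gamma> 1) - exp (\<gamma> 2))
      else if ys = [0,1,0,1] then exp (\<gamma> 1 - \<gamma> 2) - 1
      else if take 3 ys = [0,1,1] then -1
      else if take 3 ys = [1,0,0] then exp ((x3 - x1) \<bullet> \<beta> + \<gamma> 2)
      else if take 3 ys = [1,0,1] then exp ((x2 - x1) \<bullet> \<beta> + \<gamma> 1)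
      else 0)"

definition Xpath :: "real^'k \<Rightarrow> real^'k \<Rightarrow> real^'k \<Rightarrow> int \<Rightarrow> real^'k" where
  "Xpath x1 x2 x3 t = (if t = 1 then x1 else if t = 2 then x2 else x3)"

end

theory Submission
  imports Defs
begin

(* With the initial condition 0_p, a lag l >= t reaches back before period 1 and contributes
   nothing to the index of period t; so for p >= 3 the four periods only see gamma_1, gamma_2,
   gamma_3 and the path probability is the explicit AR(3) logit likelihood. Each conditional
   expectation is then a sum over the 16 outcome paths, and after clearing the positive
   denominators 1 + e^z it becomes a polynomial identity in e^alpha, e^(x_t'beta) and
   e^gamma_l. *)

definition logit_prob :: "nat \<Rightarrow> real \<Rightarrow> real" where
  "logit_prob y z = (if y = 1 then logistic z else 1 - logistic z)"

lemma one_plus_pos_neq_0: "0 < (x::real) \<Longrightarrow> 1 + x \<noteq> 0"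
  by simp

lemma logit_prob_0: "logit_prob 0 z = 1 / (1 + exp z)"
  by (simp add: logit_prob_def logistic_def diff_divide_eq_iff one_plus_pos_neq_0)

lemma logit_prob_1: "logit_prob (Suc 0) z = exp z / (1 + exp z)"
  by (simp add: logit_prob_def logistic_def)

lemma outcomes4_eq_set_list:
  "outcomes4 = set [[a, b, c, d]. a \<leftarrow> [0, 1], b \<leftarrow> [0, 1], c \<leftarrow> [0, 1], d \<leftarrow> [0, 1]]"
proof -
  have comprehension: "outcomes4 =
      {[a, b, c, d] | a b c d. a \<in> {0, 1} \<and> b \<in> {0, 1} \<and> c \<in> {0, 1} \<and> d \<in> {0, 1}}"
    unfolding outcomes4_def by (rule set_eqI, rule iffI) (auto simp: length_Suc_conv numeral_eq_Suc)
  show ?thesis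
    unfolding comprehension by auto
qed

lemma lin_index_zero_init_lag_truncate:
  assumes "q \<le> p" "t \<le> int q + 1"
  shows "lin_index p \<beta> \<gamma> X \<alpha> (\<lambda>_. 0) ys t = lin_index q \<beta> \<gamma> X \<alpha> (\<lambda>_. 0) ys t"
proof -
  have "(\<Sum>l = Suc q..p. hist (\<lambda>_. 0) ys (t - int l) * \<gamma> l) = 0"
    using assms(2) by (intro sum.neutral) (auto simp: hist_def)
  moreover have "{1..p} = {1..q} \<union> {Suc q..p}"
    using assms(1) by auto
  ultimately show ?thesis
    unfolding lin_index_def by (simp add: sum.union_disjoint)
qed

lemma path_prob_zero_init:
  assumes "3 \<le> p"
  shows "path_prob p \<beta> \<gamma> X \<alpha> (\<lambda>_. 0) [y1, y2, y3, y4] =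
    logit_prob y1 (X 1 \<bullet> \<beta> + \<alpha>)
    * logit_prob y2 (X 2 \<bullet> \<beta> + y1 * \<gamma> 1 + \<alpha>)
    * logit_prob y3 (X 3 \<bullet> \<beta> + y2 * \<gamma> 1 + y1 * \<gamma> 2 + \<alpha>)
    * logit_prob y4 (X 4 \<bullet> \<beta> + y3 * \<gamma> 1 + y2 * \<gamma> 2 + y1 * \<gamma> 3 + \<alpha>)"
proof -
  let ?ys = "[y1, y2, y3, y4]"
  have "path_prob p \<beta> \<gamma> X \<alpha> (\<lambda>_. 0) ?ys =
      (\<Prod>t\<in>{1..4}. logit_prob (?ys ! nat (t - 1)) (lin_index 3 \<beta> \<gamma> X \<alpha> (\<lambda>_. 0) ?ys t))"
    unfolding path_prob_def logit_prob_def
    using assms by (intro prod.cong refl) (simp add: lin_index_zero_init_lag_truncate)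
  also have "{1..4::int} = {1, 2, 3, 4}"
    by auto
  finally show ?thesis
    by (simp add: lin_index_def hist_def numeral_eq_Suc algebra_simps)
qed

lemma cond_exp_m_a_zero_init:
  assumes "3 \<le> p"
  shows "cond_exp p \<beta> \<gamma> (Xpath x1 x2 x3) \<alpha> (\<lambda>_. 0) (m_a x1 x2 x3 \<beta> \<gamma>) = 0"
proof -
  define a b1 b2 b3 g1 g2 g3 where "a = exp \<alpha>" and "b1 = exp (x1 \<bullet> \<beta>)"
    and "b2 = exp (x2 \<bullet> \<beta>)" and "b3 = exp (x3 \<bullet> \<beta>)"
    and "g1 = exp (\<gamma> 1)" and "g2 = exp (\<gamma> 2)" and "g3 = exp (\<gamma> 3)"
  note exps = this
  have pos: "0 < a" "0 < b1" "0 < b2" "0 < b3" "0 < g1" "0 < g2" "0 < g3"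
    by (simp_all add: exps)
  show ?thesis
    unfolding cond_exp_def outcomes4_eq_set_list
    apply (simp add: path_prob_zero_init[OF assms] logit_prob_0 logit_prob_1 Xpath_def m_a_def
        inner_diff_left exp_add exp_diff flip: exps)
    apply (simp add: divide_simps one_plus_pos_neq_0 pos pos[THEN less_imp_neq, THEN not_sym]
        zero_less_mult_iff)
    apply (simp add: algebra_simps)
    done
qed

lemma cond_exp_m_b_zero_init:
  assumes "3 \<le> p"
  shows "cond_exp p \<beta> \<gamma> (Xpath x1 x2 x3) \<alpha> (\<lambda>_. 0) (m_b x1 x2 x3 \<beta> \<gamma>) = 0"
proof -
  define a b1 b2 b3 g1 g2 g3 where "a = exp \<alpha>" and "b1 = exp (x1 \<bullet> \<beta>)"
    and "b2 = exp (x2 \<bullet> \<beta>)" and "b3 = exp (x3 \<bullet> \<beta>)"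
    and "g1 = exp (\<gamma> 1)" and "g2 = exp (\<gamma> 2)" and "g3 = exp (\<gamma> 3)"
  note exps = this
  have pos: "0 < a" "0 < b1" "0 < b2" "0 < b3" "0 < g1" "0 < g2" "0 < g3"
    by (simp_all add: exps)
  show ?thesis
    unfolding cond_exp_def outcomes4_eq_set_list
    apply (simp add: path_prob_zero_init[OF assms] logit_prob_0 logit_prob_1 Xpath_def m_b_def
        inner_diff_left exp_add exp_diff flip: exps)
    apply (simp add: divide_simps one_plus_pos_neq_0 pos pos[THEN less_imp_neq, THEN not_sym]
        zero_less_mult_iff)
    apply (simp add: algebra_simps)
    done
qed

lemma cond_exp_m_c_zero_init:
  assumes "3 \<le> p"
  shows "cond_exp p \<beta> \<gamma> (Xpath x1 x2 x3) \<alpha> (\<lambda>_. 0) (m_c x1 x2 x3 \<beta> \<gamma>) = 0"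
proof -
  define a b1 b2 b3 g1 g2 g3 where "a = exp \<alpha>" and "b1 = exp (x1 \<bullet> \<beta>)"
    and "b2 = exp (x2 \<bullet> \<beta>)" and "b3 = exp (x3 \<bullet> \<beta>)"
    and "g1 = exp (\<gamma> 1)" and "g2 = exp (\<gamma> 2)" and "g3 = exp (\<gamma> 3)"
  note exps = this
  have pos: "0 < a" "0 < b1" "0 < b2" "0 < b3" "0 < g1" "0 < g2" "0 < g3"
    by (simp_all add: exps)
  show ?thesis
    unfolding cond_exp_def outcomes4_eq_set_list
    apply (simp add: path_prob_zero_init[OF assms] logit_prob_0 logit_prob_1 Xpath_def m_c_def
        inner_diff_left exp_add exp_diff flip: exps)
    apply (simp add: divide_simps one_plus_pos_neq_0 pos pos[THEN less_imp_neq, THEN not_sym]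
        zero_less_mult_iff)
    apply (simp add: algebra_simps)
    done
qed

theorem lemma6:
  fixes p :: nat and \<beta>0 :: "real^'k" and \<gamma>0 :: "nat \<Rightarrow> real"
    and x1 x2 x3 :: "real^'k" and \<alpha> :: real
  assumes "p \<ge> 3"
  shows "cond_exp p \<beta>0 \<gamma>0 (Xpath x1 x2 x3) \<alpha> (\<lambda>_. 0) (m_a x1 x2 x3 \<beta>0 \<gamma>0) = 0
       \<and> cond_exp p \<beta>0 \<gamma>0 (Xpath x1 x2 x3) \<alpha> (\<lambda>_. 0) (m_b x1 x2 x3 \<beta>0 \<gamma>0) = 0
       \<and> cond_exp p \<beta>0 \<gamma>0 (Xpath x1 x2 x3) \<alpha> (\<lambda>_. 0) (m_c x1 x2 x3 \<beta>0 \<gamma>0) = 0"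
  using cond_exp_m_a_zero_init[OF assms] cond_exp_m_b_zero_init[OF assms]
    cond_exp_m_c_zero_init[OF assms]
  by blast

end
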